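(* Let $\pi$ be a positive probability density on $\mathbb{R}^d$ with $\log\pi\in C^1(\mathbb{R}^d)$ and let $\mu_\sigma$ be a symmetric probability density on $\mathbb{R}^d$ ($\mu_\sigma(z)=\mu_\sigma(-z)$). Let $P^R$ be the Metropolis--Hastings kernel with target $\pi$ and candidate $y=x+z$, $z\sim\mu_\sigma$. Let $\check P^B$ be the Metropolis--Hastings kernel with target $\pi$ and candidate generated by drawing $z\sim\mu_\sigma$, setting $\check b=1$ with probability $\check p(x,z)=1/(1+e^{-z^T\nabla\log\pi(x)})$ and $\check b=-1$ otherwise, and proposing $y=x+\check b z$. Then $\mathrm{Gap}(P^R)\ge\mathrm{Gap}(\check P^B)/2$.
   Context: Metropolis--Hastings kernel with target $\pi$ and candidate density $q(x,y)$: propose $y\sim q(x,\cdot)$ and accept with probability $\min\{1,\pi(y)q(y,x)/(\pi(x)q(x,y))\}$, else stay. $\mathrm{Gap}(P)=\inf_{f\in L^2_{0,1}(\pi)}\frac12\int (f(y)-f(x))^2\pi(dx)P(x,dy)$ with $L^2_{0,1}(\pi)=\{f:\mathbb{E}_\pi f=0,\mathrm{Var}_\pi f=1\}$. *)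

theory Defs
  imports "HOL-Probability.Probability"
begin

definition prob_density :: "('a::euclidean_space \<Rightarrow> real) \<Rightarrow> bool" where
  "prob_density p \<longleftrightarrow> p \<in> borel_measurable borel \<and> (\<forall>x. 0 \<le> p x)
      \<and> (\<integral>\<^sup>+ x. ennreal (p x) \<partial>lborel) = 1"

definition mh_accept :: "('a \<Rightarrow> real) \<Rightarrow> ('a \<Rightarrow> 'a \<Rightarrow> real) \<Rightarrow> 'a \<Rightarrow> 'a \<Rightarrow> real" where
  "mh_accept tgt q x y = min 1 ((tgt y * q y x) / (tgt x * q x y))"

definition mh_kernel :: "('a::euclidean_space \<Rightarrow> real) \<Rightarrow> ('a \<Rightarrow> 'a \<Rightarrow> real) \<Rightarrow> 'a \<Rightarrow> 'a measure" where
  "mh_kernel tgt q x =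
     bind (density lborel (\<lambda>y. ennreal (q x y)))
       (\<lambda>y. bind (measure_pmf (bernoulli_pmf (mh_accept tgt q x y)))
               (\<lambda>b. return borel (if b then y else x)))"

definition L2_01 :: "('a::euclidean_space \<Rightarrow> real) \<Rightarrow> ('a \<Rightarrow> real) set" where
  "L2_01 tgt = {f. f \<in> borel_measurable borel
      \<and> integrable (density lborel tgt) (\<lambda>x. (f x)\<^sup>2)
      \<and> (\<integral>x. f x \<partial>density lborel tgt) = 0
      \<and> (\<integral>x. (f x - (\<integral>u. f u \<partial>density lborel tgt))\<^sup>2 \<partial>density lborel tgt) = 1}"

definition dirichlet_form :: "('a::euclidean_space \<Rightarrow> real) \<Rightarrow> ('a \<Rightarrow> 'a measure) \<Rightarrow> ('a \<Rightarrow> real) \<Rightarrow> ennreal" where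
  "dirichlet_form tgt P f =
     (\<integral>\<^sup>+ x. (\<integral>\<^sup>+ y. ennreal ((f y - f x)\<^sup>2 / 2) \<partial>P x) \<partial>density lborel tgt)"

definition spectral_gap :: "('a::euclidean_space \<Rightarrow> real) \<Rightarrow> ('a \<Rightarrow> 'a measure) \<Rightarrow> ennreal" where
  "spectral_gap tgt P = (INF f \<in> L2_01 tgt. dirichlet_form tgt P f)"

definition rw_proposal :: "('a::euclidean_space \<Rightarrow> real) \<Rightarrow> 'a \<Rightarrow> 'a \<Rightarrow> real" where
  "rw_proposal mu x y = mu (y - x)"

definition pcheck :: "('a::euclidean_space \<Rightarrow> 'a) \<Rightarrow> 'a \<Rightarrow> 'a \<Rightarrow> real" where
  "pcheck g x z = 1 / (1 + exp (- (z \<bullet> g x)))"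

text \<open>Density of the candidate y = x + b z with z ~ mu, b = 1 w.p. pcheck(x,z), b = -1
  otherwise: the b=1 branch contributes mu(y-x) pcheck(x,y-x), the b=-1 branch
  contributes mu(x-y)(1 - pcheck(x,x-y)).\<close>
definition barker_proposal :: "('a::euclidean_space \<Rightarrow> real) \<Rightarrow> ('a \<Rightarrow> 'a) \<Rightarrow> 'a \<Rightarrow> 'a \<Rightarrow> real" where
  "barker_proposal mu g x y =
     mu (y - x) * pcheck g x (y - x) + mu (x - y) * (1 - pcheck g x (x - y))"

end

theory Submission
  imports Defs
begin

text \<open>
  Since \<open>0 \<le> pcheck \<le> 1\<close> and \<open>\<mu>\<close> is symmetric, the Barker candidate density is at most
  \<open>2 \<mu>(y - x)\<close>, twice the random-walk one. The Dirichlet form of a Metropolis--Hastings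
  kernel only sees its off-diagonal part, whose density \<open>q(x,y) \<alpha>(x,y)\<close> equals
  \<open>min (q(x,y)) (\<pi>(y) q(y,x) / \<pi>(x))\<close> and is therefore monotone in the candidate density.
  This Peskun-type comparison gives the factor 2.
\<close>

definition move_or_stay :: "real \<Rightarrow> 'a::topological_space \<Rightarrow> 'a \<Rightarrow> 'a measure" where
  "move_or_stay p x y = measure_pmf (bernoulli_pmf p) \<bind> (\<lambda>b. return borel (if b then y else x))"

lemma mh_kernel_eq_bind_move_or_stay:
  "mh_kernel tgt q x = density lborel (\<lambda>y. ennreal (q x y)) \<bind> (\<lambda>y. move_or_stay (mh_accept tgt q x y) x y)"
  by (simp add: mh_kernel_def move_or_stay_def)

lemma measurable_return_if:
  "(\<lambda>b. return borel (if b then y else x)) \<in> measurable (measure_pmf (bernoulli_pmf p)) (subprob_algebra borel)"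
  by (simp add: space_subprob_algebra subprob_space_return)

lemma sets_move_or_stay: "sets (move_or_stay p x y) = sets borel"
  unfolding move_or_stay_def by (rule sets_bind) auto

lemma nn_integral_move_or_stay:
  assumes "0 \<le> p" "p \<le> 1" and h: "h \<in> borel_measurable borel"
  shows "(\<integral>\<^sup>+z. h z \<partial>move_or_stay p x y) = h y * ennreal p + h x * ennreal (1 - p)"
  unfolding move_or_stay_def
  using assms by (simp add: nn_integral_bind[OF h measurable_return_if] nn_integral_return)

lemma measurable_move_or_stay:
  assumes [measurable]: "a \<in> borel_measurable borel" and a01: "\<And>y. 0 \<le> a y" "\<And>y. a y \<le> 1"
  shows "(\<lambda>y. move_or_stay (a y) x y) \<in> measurable borel (subprob_algebra borel)"
proof (rule measurable_subprob_algebra)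
  show "subprob_space (move_or_stay (a y) x y)" for y
    unfolding move_or_stay_def
    by (rule subprob_space_bind[OF _ measurable_return_if])
       (simp add: prob_space_imp_subprob_space measure_pmf.prob_space_axioms)
next
  fix A :: "'a set" assume [measurable]: "A \<in> sets borel"
  have "emeasure (move_or_stay (a y) x y) A = indicator A y * ennreal (a y) + indicator A x * ennreal (1 - a y)" for y
    using nn_integral_move_or_stay[OF a01, of "indicator A" y x]
    by (simp add: nn_integral_indicator sets_move_or_stay)
  then show "(\<lambda>y. emeasure (move_or_stay (a y) x y) A) \<in> borel_measurable borel"
    by simp
qed (simp add: sets_move_or_stay)

lemma mh_accept_nonneg:
  "0 < tgt x \<Longrightarrow> 0 \<le> tgt y \<Longrightarrow> 0 \<le> q x y \<Longrightarrow> 0 \<le> q y x \<Longrightarrow> 0 \<le> mh_accept tgt q x y"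
  by (simp add: mh_accept_def)

lemma mh_accept_le_one: "mh_accept tgt q x y \<le> 1"
  by (simp add: mh_accept_def)

lemma nn_integral_mh_kernel_off_diagonal:
  fixes tgt :: "'a::euclidean_space \<Rightarrow> real"
  assumes [measurable]: "tgt \<in> borel_measurable borel"
    "(\<lambda>y. q x y) \<in> borel_measurable borel" "(\<lambda>y. q y x) \<in> borel_measurable borel"
    "h \<in> borel_measurable borel"
    and tgt_pos: "\<And>x. 0 < tgt x" and q_nonneg: "\<And>x y. 0 \<le> q x y" and "h x = 0"
  shows "(\<integral>\<^sup>+y. h y \<partial>mh_kernel tgt q x) = (\<integral>\<^sup>+y. ennreal (q x y * mh_accept tgt q x y) * h y \<partial>lborel)"
proof -
  let ?a = "mh_accept tgt q x"
  have [measurable]: "?a \<in> borel_measurable borel"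
    unfolding mh_accept_def by measurable
  have a01: "0 \<le> ?a y" "?a y \<le> 1" for y
    by (simp_all add: mh_accept_nonneg less_imp_le tgt_pos q_nonneg mh_accept_le_one)
  have "(\<integral>\<^sup>+y. h y \<partial>mh_kernel tgt q x)
      = (\<integral>\<^sup>+y. (\<integral>\<^sup>+z. h z \<partial>move_or_stay (?a y) x y) \<partial>density lborel (\<lambda>y. ennreal (q x y)))"
    unfolding mh_kernel_eq_bind_move_or_stay
  proof (rule nn_integral_bind)
    show "(\<lambda>y. move_or_stay (?a y) x y) \<in> density lborel (\<lambda>y. ennreal (q x y)) \<rightarrow>\<^sub>M subprob_algebra borel"
      using measurable_move_or_stay[of ?a, OF _ a01] by (simp cong: measurable_cong_sets)
  qed simp
  also have "\<dots> = (\<integral>\<^sup>+y. ennreal (q x y) * (h y * ennreal (?a y)) \<partial>lborel)"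
    using \<open>h x = 0\<close> by (simp add: nn_integral_move_or_stay[OF a01] nn_integral_density)
  also have "\<dots> = (\<integral>\<^sup>+y. ennreal (q x y * ?a y) * h y \<partial>lborel)"
    by (simp add: ennreal_mult q_nonneg a01 mult_ac)
  finally show ?thesis .
qed

lemma mh_flow_eq_min:
  assumes "0 < tgt x" "0 \<le> tgt y" "0 \<le> q x y" "0 \<le> q y x"
  shows "q x y * mh_accept tgt q x y = min (q x y) (tgt y * q y x / tgt x)"
  using assms by (cases "q x y = 0") (auto simp: mh_accept_def min_def field_simps)

lemma mh_flow_mono:
  assumes "0 < tgt x" "0 < tgt y" "0 \<le> c" and "0 \<le> q x y" "0 \<le> q y x" "0 \<le> q' x y" "0 \<le> q' y x"
    and "q x y \<le> c * q' x y" "q y x \<le> c * q' y x"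
  shows "q x y * mh_accept tgt q x y \<le> c * (q' x y * mh_accept tgt q' x y)"
proof -
  have "min (q x y) (tgt y * q y x / tgt x) \<le> min (c * q' x y) (c * (tgt y * q' y x / tgt x))"
    using assms by (intro min.mono) (auto simp: divide_right_mono mult.left_commute)
  also have "\<dots> = c * min (q' x y) (tgt y * q' y x / tgt x)"
    using assms by (cases "q' x y = 0") (auto simp: min_mult_distrib_left)
  finally show ?thesis
    using assms by (simp add: mh_flow_eq_min)
qed

lemma dirichlet_form_mh_kernel_le:
  fixes tgt :: "'a::euclidean_space \<Rightarrow> real"
  assumes [measurable]: "tgt \<in> borel_measurable borel" "f \<in> borel_measurable borel"
      "(\<lambda>(x, y). q x y) \<in> borel_measurable (borel \<Otimes>\<^sub>M borel)"
      "(\<lambda>(x, y). q' x y) \<in> borel_measurable (borel \<Otimes>\<^sub>M borel)"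
    and tgt_pos: "\<And>x. 0 < tgt x" and "0 \<le> c"
    and q_nonneg: "\<And>x y. 0 \<le> q x y" and q'_nonneg: "\<And>x y. 0 \<le> q' x y"
    and dominated: "\<And>x y. q x y \<le> c * q' x y"
  shows "dirichlet_form tgt (mh_kernel tgt q) f \<le> ennreal c * dirichlet_form tgt (mh_kernel tgt q') f"
proof -
  let ?h = "\<lambda>x y. ennreal ((f y - f x)\<^sup>2 / 2)"
  let ?flow = "\<lambda>p x y. ennreal (p x y * mh_accept tgt p x y)"
  have kernel: "(\<integral>\<^sup>+y. ?h x y \<partial>mh_kernel tgt p x) = (\<integral>\<^sup>+y. ?flow p x y * ?h x y \<partial>lborel)"
    if [measurable]: "(\<lambda>(x, y). p x y) \<in> borel_measurable (borel \<Otimes>\<^sub>M borel)"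
      and "\<And>x y. 0 \<le> p x y" for p x
    by (rule nn_integral_mh_kernel_off_diagonal) (use tgt_pos that(2) in simp_all)
  have flow_measurable [measurable]: "(\<lambda>(x, y). ?flow p x y) \<in> borel_measurable (borel \<Otimes>\<^sub>M borel)"
    if [measurable]: "(\<lambda>(x, y). p x y) \<in> borel_measurable (borel \<Otimes>\<^sub>M borel)" for p
    unfolding mh_accept_def by measurable
  have flow_le: "?flow q x y * ?h x y \<le> ennreal c * (?flow q' x y * ?h x y)" for x y
  proof -
    have "q x y * mh_accept tgt q x y \<le> c * (q' x y * mh_accept tgt q' x y)"
      by (rule mh_flow_mono) (simp_all add: tgt_pos \<open>0 \<le> c\<close> q_nonneg q'_nonneg dominated)
    then have "?flow q x y \<le> ennreal c * ?flow q' x y"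
      by (simp add: ennreal_mult'[OF \<open>0 \<le> c\<close>, symmetric] ennreal_leI)
    then show ?thesis
      unfolding mult.assoc[symmetric] by (rule mult_right_mono) simp
  qed
  have "dirichlet_form tgt (mh_kernel tgt q) f
      = (\<integral>\<^sup>+x. (\<integral>\<^sup>+y. ?flow q x y * ?h x y \<partial>lborel) \<partial>density lborel tgt)"
    unfolding dirichlet_form_def using q_nonneg by (simp add: kernel)
  also have "\<dots> \<le> (\<integral>\<^sup>+x. (\<integral>\<^sup>+y. ennreal c * (?flow q' x y * ?h x y) \<partial>lborel) \<partial>density lborel tgt)"
    by (intro nn_integral_mono flow_le)
  also have "\<dots> = ennreal c * (\<integral>\<^sup>+x. (\<integral>\<^sup>+y. ?flow q' x y * ?h x y \<partial>lborel) \<partial>density lborel tgt)"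
    by (simp add: nn_integral_cmult)
  also have "\<dots> = ennreal c * dirichlet_form tgt (mh_kernel tgt q') f"
    unfolding dirichlet_form_def using q'_nonneg by (simp add: kernel)
  finally show ?thesis .
qed

lemma spectral_gap_divide_le:
  assumes "\<And>f. f \<in> L2_01 tgt \<Longrightarrow> dirichlet_form tgt P f \<le> c * dirichlet_form tgt P' f" and "0 < c"
  shows "spectral_gap tgt P / c \<le> spectral_gap tgt P'"
  unfolding spectral_gap_def
proof (rule INF_greatest)
  fix f assume "f \<in> L2_01 tgt"
  then have "(INF f \<in> L2_01 tgt. dirichlet_form tgt P f) \<le> c * dirichlet_form tgt P' f"
    by (meson INF_lower assms(1) order_trans)
  then show "(INF f \<in> L2_01 tgt. dirichlet_form tgt P f) / c \<le> dirichlet_form tgt P' f"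
    using \<open>0 < c\<close> by (rule divide_le_posI_ennreal[rotated])
qed

theorem spectral_gap_mh_kernel_divide_le:
  fixes tgt :: "'a::euclidean_space \<Rightarrow> real"
  assumes "tgt \<in> borel_measurable borel"
      "(\<lambda>(x, y). q x y) \<in> borel_measurable (borel \<Otimes>\<^sub>M borel)"
      "(\<lambda>(x, y). q' x y) \<in> borel_measurable (borel \<Otimes>\<^sub>M borel)"
    and "\<And>x. 0 < tgt x" and "0 < c"
    and "\<And>x y. 0 \<le> q x y" "\<And>x y. 0 \<le> q' x y" "\<And>x y. q x y \<le> c * q' x y"
  shows "spectral_gap tgt (mh_kernel tgt q) / ennreal c \<le> spectral_gap tgt (mh_kernel tgt q')"
proof (rule spectral_gap_divide_le)
  show "dirichlet_form tgt (mh_kernel tgt q) f \<le> ennreal c * dirichlet_form tgt (mh_kernel tgt q') f"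
    if "f \<in> L2_01 tgt" for f
    using that assms by (intro dirichlet_form_mh_kernel_le) (auto simp: L2_01_def)
qed (simp add: \<open>0 < c\<close>)

lemma pcheck_nonneg: "0 \<le> pcheck g x z"
  by (simp add: pcheck_def add_pos_pos)

lemma pcheck_le_one: "pcheck g x z \<le> 1"
  by (simp add: pcheck_def add_pos_pos)

lemma barker_proposal_nonneg: "(\<And>z. 0 \<le> mu z) \<Longrightarrow> 0 \<le> barker_proposal mu g x y"
  unfolding barker_proposal_def
  by (intro add_nonneg_nonneg mult_nonneg_nonneg) (simp_all add: pcheck_nonneg pcheck_le_one)

lemma barker_proposal_le_twice_rw_proposal:
  assumes "\<And>z. 0 \<le> mu z" and "\<And>z. mu z = mu (- z)"
  shows "barker_proposal mu g x y \<le> 2 * rw_proposal mu x y"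
proof -
  have "mu (x - y) = mu (y - x)"
    using assms(2)[of "y - x"] by simp
  moreover have "mu (y - x) * pcheck g x (y - x) \<le> mu (y - x)"
    "mu (y - x) * (1 - pcheck g x (x - y)) \<le> mu (y - x)"
    by (simp_all add: assms(1) mult_left_le pcheck_nonneg pcheck_le_one)
  ultimately show ?thesis
    by (simp add: barker_proposal_def rw_proposal_def)
qed

theorem proposition3p3:
  fixes tgt mu :: "real^'d \<Rightarrow> real" and g :: "real^'d \<Rightarrow> real^'d"
  assumes pi_dens: "prob_density tgt"
    and pi_pos: "\<And>x. tgt x > 0"
    and grad: "\<And>x. ((\<lambda>u. ln (tgt u)) has_derivative (\<lambda>h. g x \<bullet> h)) (at x)"
    and grad_cont: "continuous_on UNIV g"
    and mu_dens: "prob_density mu"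
    and mu_sym: "\<And>z. mu z = mu (- z)"
  shows "spectral_gap tgt (mh_kernel tgt (rw_proposal mu))
           \<ge> spectral_gap tgt (mh_kernel tgt (barker_proposal mu g)) / 2"
proof -
  have [measurable]: "tgt \<in> borel_measurable borel" "mu \<in> borel_measurable borel"
      and mu_nonneg: "\<And>z. 0 \<le> mu z"
    using pi_dens mu_dens by (simp_all add: prob_density_def)
  have [measurable]: "g \<in> borel_measurable borel"
    using grad_cont by (rule borel_measurable_continuous_onI)
  have "spectral_gap tgt (mh_kernel tgt (barker_proposal mu g)) / ennreal 2
      \<le> spectral_gap tgt (mh_kernel tgt (rw_proposal mu))"
  proof (rule spectral_gap_mh_kernel_divide_le)
    show "(\<lambda>(x, y). rw_proposal mu x y) \<in> borel_measurable (borel \<Otimes>\<^sub>M borel)"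
      unfolding rw_proposal_def by measurable
    show "(\<lambda>(x, y). barker_proposal mu g x y) \<in> borel_measurable (borel \<Otimes>\<^sub>M borel)"
      unfolding barker_proposal_def pcheck_def by measurable
    show "barker_proposal mu g x y \<le> 2 * rw_proposal mu x y" for x y
      using mu_nonneg mu_sym by (rule barker_proposal_le_twice_rw_proposal)
  qed (simp_all add: pi_pos mu_nonneg barker_proposal_nonneg rw_proposal_def)
  then show ?thesis
    by simp
qed

end
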